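(* Let $S \subseteq \mathbb{R}^n$ be nonempty, closed and convex, let $F = (F_1,\dots,F_m)^\top \colon S\to\mathbb{R}^m$ be continuous with each $F_i$ $\sigma_i$-convex for some $\sigma_i > 0$, and define $u_0(x) := \sup_{y \in S}\min_{i=1,\dots,m}\{F_i(x) - F_i(y)\}$, $x\in S$. Let $\sigma := \min_i \sigma_i$. Then \[ u_0(x) \ge \frac{\sigma}{2}\inf_{x^\ast\in X^\ast}\|x - x^\ast\|^2 \quad\text{for all } x \in S, \] where $X^\ast$ is the set of Pareto optimal solutions of $\min_{x\in S}F(x)$.
   Context: A function $h\colon S\to\mathbb{R}$ is $\sigma$-convex if $h(\alpha x + (1-\alpha)y) \le \alpha h(x) + (1-\alpha)h(y) - \frac{\alpha(1-\alpha)\sigma}{2}\|x-y\|^2$ for all $x,y\in S$, $\alpha\in[0,1]$. A point $x^\ast\in S$ is Pareto optimal if there is no $x\in S$ with $F_i(x)\le F_i(x^\ast)$ for all $i$ and $F(x)\ne F(x^\ast)$. *)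

theory Defs
  imports "HOL-Analysis.Analysis"
begin

definition sigma_convex_on :: "real \<Rightarrow> ('a::real_normed_vector) set \<Rightarrow> ('a \<Rightarrow> real) \<Rightarrow> bool" where
  "sigma_convex_on \<sigma> S h \<longleftrightarrow>
     (\<forall>x\<in>S. \<forall>y\<in>S. \<forall>\<alpha>::real. 0 \<le> \<alpha> \<and> \<alpha> \<le> 1 \<longrightarrow>
        h (\<alpha> *\<^sub>R x + (1 - \<alpha>) *\<^sub>R y)
          \<le> \<alpha> * h x + (1 - \<alpha>) * h y - \<alpha> * (1 - \<alpha>) * \<sigma> / 2 * (norm (x - y))\<^sup>2)"

definition pareto_optimal :: "'a set \<Rightarrow> nat \<Rightarrow> (nat \<Rightarrow> 'a \<Rightarrow> real) \<Rightarrow> 'a \<Rightarrow> bool" where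
  "pareto_optimal S m F xs \<longleftrightarrow> xs \<in> S \<and>
     \<not> (\<exists>x\<in>S. (\<forall>i\<in>{1..m}. F i x \<le> F i xs) \<and> (\<exists>i\<in>{1..m}. F i x \<noteq> F i xs))"

definition u0 :: "'a set \<Rightarrow> nat \<Rightarrow> (nat \<Rightarrow> 'a \<Rightarrow> real) \<Rightarrow> 'a \<Rightarrow> real" where
  "u0 S m F x = (SUP y\<in>S. Min ((\<lambda>i. F i x - F i y) ` {1..m}))"

end

theory Submission
  imports Defs
begin

text \<open>Fix \<open>x\<close> and put \<open>g y = max\<^sub>i (F\<^sub>i y - F\<^sub>i x)\<close>, so that \<open>u\<^sub>0 x = - inf\<^sub>S g\<close>.
  As a maximum of \<open>\<sigma>\<close>-convex functions, \<open>g\<close> is \<open>\<sigma>\<close>-convex and continuous; its sublevel sets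
  are therefore compact and it attains its infimum at some \<open>x\<^sup>*\<close>. Strict convexity of the \<open>F\<^sub>i\<close>
  makes every such minimiser Pareto optimal, and the quadratic growth
  \<open>g x\<^sup>* + \<sigma>/2 \<parallel>x - x\<^sup>*\<parallel>\<^sup>2 \<le> g x = 0\<close> of a \<open>\<sigma>\<close>-convex function around its minimiser gives the bound.\<close>

lemma sigma_convex_onD:
  assumes "sigma_convex_on \<sigma> S h" "x \<in> S" "y \<in> S" "0 \<le> \<alpha>" "\<alpha> \<le> 1"
  shows "h (\<alpha> *\<^sub>R x + (1 - \<alpha>) *\<^sub>R y)
           \<le> \<alpha> * h x + (1 - \<alpha>) * h y - \<alpha> * (1 - \<alpha>) * \<sigma> / 2 * (norm (x - y))\<^sup>2"
  using assms unfolding sigma_convex_on_def by blast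

lemma sigma_convex_on_mono:
  assumes "sigma_convex_on \<sigma> S h" "\<sigma>' \<le> \<sigma>"
  shows "sigma_convex_on \<sigma>' S h"
  unfolding sigma_convex_on_def
proof (intro ballI allI impI)
  fix x y and \<alpha> :: real
  assume "x \<in> S" "y \<in> S" "0 \<le> \<alpha> \<and> \<alpha> \<le> 1"
  moreover from this have "\<alpha> * (1 - \<alpha>) * \<sigma>' / 2 * (norm (x - y))\<^sup>2
                           \<le> \<alpha> * (1 - \<alpha>) * \<sigma> / 2 * (norm (x - y))\<^sup>2"
    using assms(2) by (intro mult_right_mono divide_right_mono mult_left_mono) auto
  ultimately show "h (\<alpha> *\<^sub>R x + (1 - \<alpha>) *\<^sub>R y)
                   \<le> \<alpha> * h x + (1 - \<alpha>) * h y - \<alpha> * (1 - \<alpha>) * \<sigma>' / 2 * (norm (x - y))\<^sup>2"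
    using sigma_convex_onD[OF assms(1), of x y \<alpha>] by linarith
qed

lemma sigma_convex_on_diff_const:
  assumes "sigma_convex_on \<sigma> S h"
  shows "sigma_convex_on \<sigma> S (\<lambda>y. h y - c)"
  using assms unfolding sigma_convex_on_def by (auto simp: algebra_simps)

lemma sigma_convex_on_Max:
  assumes "finite I" "I \<noteq> {}" "\<And>i. i \<in> I \<Longrightarrow> sigma_convex_on \<sigma> S (f i)"
  shows "sigma_convex_on \<sigma> S (\<lambda>y. Max ((\<lambda>i. f i y) ` I))"
  unfolding sigma_convex_on_def
proof (intro ballI allI impI)
  fix x y and \<alpha> :: real
  assume xy: "x \<in> S" "y \<in> S" and \<alpha>: "0 \<le> \<alpha> \<and> \<alpha> \<le> 1"
  let ?M = "\<lambda>z. Max ((\<lambda>i. f i z) ` I)"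
  have "f i (\<alpha> *\<^sub>R x + (1 - \<alpha>) *\<^sub>R y)
          \<le> \<alpha> * ?M x + (1 - \<alpha>) * ?M y - \<alpha> * (1 - \<alpha>) * \<sigma> / 2 * (norm (x - y))\<^sup>2"
    if i: "i \<in> I" for i
  proof -
    have "\<alpha> * f i x \<le> \<alpha> * ?M x" "(1 - \<alpha>) * f i y \<le> (1 - \<alpha>) * ?M y"
      using \<alpha> i assms(1) by (auto intro!: mult_left_mono)
    then show ?thesis
      using sigma_convex_onD[OF assms(3)[OF i] xy, of \<alpha>] \<alpha> by linarith
  qed
  then show "?M (\<alpha> *\<^sub>R x + (1 - \<alpha>) *\<^sub>R y)
               \<le> \<alpha> * ?M x + (1 - \<alpha>) * ?M y - \<alpha> * (1 - \<alpha>) * \<sigma> / 2 * (norm (x - y))\<^sup>2"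
    using assms(1,2) by simp
qed

lemma sigma_convex_on_Max_diff:
  assumes "finite I" "I \<noteq> {}" "\<And>i. i \<in> I \<Longrightarrow> sigma_convex_on (\<sigma>s i) S (F i)"
  shows "sigma_convex_on (Min (\<sigma>s ` I)) S (\<lambda>y. Max ((\<lambda>i. F i y - c i) ` I))"
proof (rule sigma_convex_on_Max[OF assms(1,2)])
  fix i
  assume i: "i \<in> I"
  then have "Min (\<sigma>s ` I) \<le> \<sigma>s i"
    using assms(1) by simp
  then show "sigma_convex_on (Min (\<sigma>s ` I)) S (\<lambda>y. F i y - c i)"
    by (intro sigma_convex_on_diff_const sigma_convex_on_mono[OF assms(3)[OF i]])
qed

lemma continuous_on_Max:
  fixes f :: "'i \<Rightarrow> 'a::topological_space \<Rightarrow> real"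
  assumes "finite I" "I \<noteq> {}" "\<And>i. i \<in> I \<Longrightarrow> continuous_on S (f i)"
  shows "continuous_on S (\<lambda>y. Max ((\<lambda>i. f i y) ` I))"
  using assms
proof (induction I rule: finite_ne_induct)
  case (singleton i)
  then show ?case by simp
next
  case (insert i I)
  then show ?case by (auto intro!: continuous_on_max)
qed

text \<open>The point \<open>z\<close> at distance 1 from \<open>x\<^sub>0\<close> towards \<open>y\<close> is \<open>z = a y + (1 - a) x\<^sub>0\<close> with
  \<open>a = 1 / \<parallel>y - x\<^sub>0\<parallel>\<close>, and \<open>a (1 - a) \<parallel>y - x\<^sub>0\<parallel>\<^sup>2 = \<parallel>y - x\<^sub>0\<parallel> - 1\<close>.\<close>
lemma sigma_convex_on_unit_step:
  assumes "sigma_convex_on \<sigma> S h" "convex S" "x\<^sub>0 \<in> S" "y \<in> S" "1 \<le> norm (y - x\<^sub>0)"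
  obtains z where "z \<in> S" "norm (z - x\<^sub>0) = 1"
    "h z \<le> max (h x\<^sub>0) (h y) - \<sigma> / 2 * (norm (y - x\<^sub>0) - 1)"
proof
  define r where "r = norm (y - x\<^sub>0)"
  define a where "a = 1 / r"
  have r: "1 \<le> r" and "y \<noteq> x\<^sub>0" using assms(5) by (auto simp: r_def)
  have a: "0 \<le> a" "a \<le> 1" using r by (auto simp: a_def)
  define z where "z = a *\<^sub>R y + (1 - a) *\<^sub>R x\<^sub>0"
  show "z \<in> S"
    unfolding z_def using convexD[OF assms(2,4,3)] a by simp
  have "z - x\<^sub>0 = a *\<^sub>R (y - x\<^sub>0)"
    by (simp add: z_def algebra_simps)
  then show "norm (z - x\<^sub>0) = 1"
    using \<open>y \<noteq> x\<^sub>0\<close> by (simp add: a_def r_def)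
  have "a * h y + (1 - a) * h x\<^sub>0 \<le> max (h x\<^sub>0) (h y)"
    using a by (intro convex_bound_le) auto
  moreover have "a * r = 1"
    using r by (simp add: a_def)
  then have "a * (1 - a) * \<sigma> / 2 * r\<^sup>2 = \<sigma> / 2 * (r - 1)"
    by (simp add: power2_eq_square algebra_simps)
  ultimately show "h z \<le> max (h x\<^sub>0) (h y) - \<sigma> / 2 * (norm (y - x\<^sub>0) - 1)"
    using sigma_convex_onD[OF assms(1,4,3) a] unfolding z_def[symmetric] r_def[symmetric]
    by linarith
qed

lemma sigma_convex_on_sublevel_bounded:
  fixes S :: "'a::euclidean_space set"
  assumes "sigma_convex_on \<sigma> S h" "\<sigma> > 0" "convex S" "closed S" "continuous_on S h"
  shows "bounded {y \<in> S. h y \<le> t}"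
proof (cases "{y \<in> S. h y \<le> t} = {}")
  case False
  then obtain x\<^sub>0 where x\<^sub>0: "x\<^sub>0 \<in> S" "h x\<^sub>0 \<le> t" by blast
  have "compact (S \<inter> cball x\<^sub>0 1)"
    using assms(4) by (simp add: closed_Int_compact)
  moreover have "continuous_on (S \<inter> cball x\<^sub>0 1) h"
    using assms(5) by (rule continuous_on_subset) auto
  ultimately obtain c where c: "\<And>z. z \<in> S \<inter> cball x\<^sub>0 1 \<Longrightarrow> h c \<le> h z"
    using continuous_attains_inf[of "S \<inter> cball x\<^sub>0 1" h] x\<^sub>0 by fastforce
  define R where "R = max 1 (1 + 2 * (t - h c) / \<sigma>)"
  have "norm (y - x\<^sub>0) \<le> R" if y: "y \<in> S" "h y \<le> t" for y
  proof (cases "1 \<le> norm (y - x\<^sub>0)")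
    case True
    then obtain z where "z \<in> S" "norm (z - x\<^sub>0) = 1"
        and "h z \<le> max (h x\<^sub>0) (h y) - \<sigma> / 2 * (norm (y - x\<^sub>0) - 1)"
      using sigma_convex_on_unit_step[OF assms(1,3) x\<^sub>0(1) y(1)] by blast
    moreover from this have "h c \<le> h z"
      by (intro c) (simp add: dist_norm norm_minus_commute)
    moreover have "max (h x\<^sub>0) (h y) \<le> t"
      using x\<^sub>0(2) y(2) by simp
    ultimately have "\<sigma> / 2 * (norm (y - x\<^sub>0) - 1) \<le> t - h c"
      by linarith
    then have "norm (y - x\<^sub>0) \<le> 1 + 2 * (t - h c) / \<sigma>"
      using assms(2) by (simp add: field_simps)
    then show ?thesis
      by (simp add: R_def)
  qed (simp add: R_def)
  then have "{y \<in> S. h y \<le> t} \<subseteq> cball x\<^sub>0 R"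
    by (auto simp: dist_norm norm_minus_commute)
  then show ?thesis
    using bounded_subset by blast
qed (simp only: bounded_empty)

lemma sigma_convex_on_attains_inf:
  fixes S :: "'a::euclidean_space set"
  assumes "sigma_convex_on \<sigma> S h" "\<sigma> > 0" "S \<noteq> {}" "convex S" "closed S" "continuous_on S h"
  obtains x' where "x' \<in> S" "\<And>y. y \<in> S \<Longrightarrow> h x' \<le> h y"
proof -
  obtain x\<^sub>0 where x\<^sub>0: "x\<^sub>0 \<in> S" using assms(3) by blast
  let ?K = "{y \<in> S. h y \<le> h x\<^sub>0}"
  have "closed ?K"
    using continuous_closed_preimage[OF assms(6,5) closed_atMost[of "h x\<^sub>0"]]
    by (simp add: vimage_def Int_def atMost_def)
  then have "compact ?K"
    using sigma_convex_on_sublevel_bounded[OF assms(1,2,4,5,6)] by (simp add: compact_eq_bounded_closed)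
  moreover have "continuous_on ?K h"
    using assms(6) by (rule continuous_on_subset) auto
  ultimately obtain x' where "x' \<in> ?K" "\<And>y. y \<in> ?K \<Longrightarrow> h x' \<le> h y"
    using continuous_attains_inf[of ?K h] x\<^sub>0 by fastforce
  then show thesis
    by (intro that[of x']) force+
qed

text \<open>Comparing \<open>h x'\<close> with \<open>h (a y + (1 - a) x')\<close> gives
  \<open>h x' + (1 - a) \<sigma>/2 \<parallel>y - x'\<parallel>\<^sup>2 \<le> h y\<close> for every \<open>0 < a < 1\<close>; then let \<open>a \<rightarrow> 0\<close>.\<close>
lemma sigma_convex_on_quadratic_growth:
  assumes "sigma_convex_on \<sigma> S h" "convex S" "x' \<in> S" "\<And>z. z \<in> S \<Longrightarrow> h x' \<le> h z" "y \<in> S"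
  shows "h x' + \<sigma> / 2 * (norm (y - x'))\<^sup>2 \<le> h y"
proof -
  define c where "c = \<sigma> / 2 * (norm (y - x'))\<^sup>2"
  have step: "h x' + c \<le> h y + a * c" if a: "0 < a" "a < 1" for a
  proof -
    have "h x' \<le> h (a *\<^sub>R y + (1 - a) *\<^sub>R x')"
      using assms(4) convexD[OF assms(2,5,3)] a by simp
    also have "\<dots> \<le> a * h y + (1 - a) * h x' - a * ((1 - a) * c)"
      using sigma_convex_onD[OF assms(1,5,3)] a by (simp add: c_def mult.assoc)
    finally have "a * (h x' + (1 - a) * c) \<le> a * h y"
      by (simp add: algebra_simps)
    then have "h x' + (1 - a) * c \<le> h y"
      using a by (simp add: mult_le_cancel_left_pos)
    then show ?thesis
      by (simp add: algebra_simps)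
  qed
  show ?thesis
    unfolding c_def[symmetric]
  proof (rule field_le_epsilon)
    fix e :: real
    assume e: "0 < e"
    define a where "a = min (1/2) (e / (\<bar>c\<bar> + 1))"
    have a: "0 < a" "a < 1" using e by (auto simp: a_def)
    have "a * c \<le> e / (\<bar>c\<bar> + 1) * \<bar>c\<bar>"
      using a by (intro order_trans[OF mult_left_mono[of c "\<bar>c\<bar>"]] mult_right_mono) (auto simp: a_def)
    also have "\<dots> \<le> e"
      using e by (simp add: field_simps)
    finally show "h x' + c \<le> h y + e"
      using step[OF a] by linarith
  qed
qed

lemma sigma_convex_on_midpoint_less:
  assumes "sigma_convex_on \<sigma> S h" "\<sigma> > 0" "x \<in> S" "y \<in> S" "x \<noteq> y"
  shows "h (midpoint x y) < max (h x) (h y)"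
proof -
  have "h (midpoint x y) \<le> (h x + h y) / 2 - \<sigma> / 8 * (norm (x - y))\<^sup>2"
    using sigma_convex_onD[OF assms(1,3,4), of "1/2"]
    by (simp add: midpoint_def scaleR_add_right add_divide_distrib)
  moreover have "\<sigma> / 8 * (norm (x - y))\<^sup>2 > 0"
    using assms(2,5) by simp
  moreover have "(h x + h y) / 2 \<le> max (h x) (h y)"
    by (simp add: max_def)
  ultimately show ?thesis
    by linarith
qed

text \<open>A point dominating \<open>x'\<close> would make the midpoint strictly better in every component.\<close>
lemma pareto_optimal_if_minimises_Max:
  assumes "convex S" "x' \<in> S"
    and "\<And>i. i \<in> {1..m} \<Longrightarrow> \<sigma>s i > 0" "\<And>i. i \<in> {1..m} \<Longrightarrow> sigma_convex_on (\<sigma>s i) S (F i)"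
    and "\<And>y. y \<in> S \<Longrightarrow>
           Max ((\<lambda>i. F i x' - c i) ` {1..m}) \<le> Max ((\<lambda>i. F i y - c i) ` {1..m})"
  shows "pareto_optimal S m F x'"
  unfolding pareto_optimal_def
proof (intro conjI notI assms(2))
  assume "\<exists>z\<in>S. (\<forall>i\<in>{1..m}. F i z \<le> F i x') \<and> (\<exists>i\<in>{1..m}. F i z \<noteq> F i x')"
  then obtain z j where z: "z \<in> S" "\<And>i. i \<in> {1..m} \<Longrightarrow> F i z \<le> F i x'"
    and j: "j \<in> {1..m}" "F j z \<noteq> F j x'" by blast
  have "z \<noteq> x'" using j by auto
  have "midpoint z x' \<in> S"
    using convexD[OF assms(1) z(1) assms(2), of "1/2" "1/2"] by (simp add: midpoint_def scaleR_add_right)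
  moreover have "F i (midpoint z x') - c i < Max ((\<lambda>i. F i x' - c i) ` {1..m})"
    if i: "i \<in> {1..m}" for i
  proof -
    have "F i (midpoint z x') < F i x'"
      using sigma_convex_on_midpoint_less[OF assms(4)[OF i] assms(3)[OF i] z(1) assms(2) \<open>z \<noteq> x'\<close>]
        z(2)[OF i] by (simp add: max_absorb2)
    moreover have "F i x' - c i \<le> Max ((\<lambda>i. F i x' - c i) ` {1..m})"
      using i by (intro Max_ge) auto
    ultimately show ?thesis
      by linarith
  qed
  then have "Max ((\<lambda>i. F i (midpoint z x') - c i) ` {1..m}) < Max ((\<lambda>i. F i x' - c i) ` {1..m})"
    using j(1) by (subst Max_less_iff) auto
  ultimately show False
    using assms(5)[of "midpoint z x'"] by linarith
qed

lemma Min_image_uminus: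
  fixes f :: "'i \<Rightarrow> 'a::linordered_ab_group_add"
  assumes "finite I" "I \<noteq> {}"
  shows "Min ((\<lambda>i. - f i) ` I) = - Max (f ` I)"
proof (rule Min_eqI)
  have "Max (f ` I) \<in> f ` I"
    using assms by simp
  then show "- Max (f ` I) \<in> (\<lambda>i. - f i) ` I"
    by auto
qed (use assms in auto)

lemma u0_eq_uminus_Max_at_minimiser:
  assumes "m \<ge> 1" "x' \<in> S"
    and "\<And>y. y \<in> S \<Longrightarrow>
           Max ((\<lambda>i. F i x' - F i x) ` {1..m}) \<le> Max ((\<lambda>i. F i y - F i x) ` {1..m})"
  shows "u0 S m F x = - Max ((\<lambda>i. F i x' - F i x) ` {1..m})"
proof -
  have "Min ((\<lambda>i. F i x - F i y) ` {1..m}) = - Max ((\<lambda>i. F i y - F i x) ` {1..m})" for y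
    using Min_image_uminus[of "{1..m}" "\<lambda>i. F i y - F i x"] assms(1) by simp
  then show ?thesis
    unfolding u0_def using assms(2,3) by (auto intro!: cSup_eq_maximum)
qed

theorem corollary6p3:
  fixes S :: "(real ^ 'n) set" and m :: nat and F :: "nat \<Rightarrow> real ^ 'n \<Rightarrow> real"
    and \<sigma>s :: "nat \<Rightarrow> real" and x :: "real ^ 'n"
  assumes "S \<noteq> {}" and "closed S" and "convex S"
    and "m \<ge> 1"
    and "\<And>i. i \<in> {1..m} \<Longrightarrow> continuous_on S (F i)"
    and "\<And>i. i \<in> {1..m} \<Longrightarrow> \<sigma>s i > 0"
    and "\<And>i. i \<in> {1..m} \<Longrightarrow> sigma_convex_on (\<sigma>s i) S (F i)"
    and "x \<in> S"
  shows "u0 S m F x \<ge> (Min (\<sigma>s ` {1..m})) / 2 *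
           (INF xs\<in>{xs. pareto_optimal S m F xs}. (norm (x - xs))\<^sup>2)"
proof -
  define \<sigma> where "\<sigma> = Min (\<sigma>s ` {1..m})"
  define g where "g y = Max ((\<lambda>i. F i y - F i x) ` {1..m})" for y
  have I: "finite {1..m}" "{1..m} \<noteq> {}"
    using assms(4) by auto
  have "\<sigma> > 0"
    using I assms(6) by (simp add: \<sigma>_def)
  have g_convex: "sigma_convex_on \<sigma> S g"
    unfolding g_def \<sigma>_def using I assms(7) by (rule sigma_convex_on_Max_diff)
  moreover have "continuous_on S g"
    unfolding g_def using I assms(5) by (intro continuous_on_Max continuous_on_diff continuous_on_const)
  ultimately obtain x' where x': "x' \<in> S" "\<And>y. y \<in> S \<Longrightarrow> g x' \<le> g y"
    using sigma_convex_on_attains_inf \<open>\<sigma> > 0\<close> assms(1-3) by blast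
  have "pareto_optimal S m F x'"
    using x'(2) unfolding g_def
    by (intro pareto_optimal_if_minimises_Max[where c = "\<lambda>i. F i x" and \<sigma>s = \<sigma>s] assms(3,6,7) x'(1))
  then have "(INF xs\<in>{xs. pareto_optimal S m F xs}. (norm (x - xs))\<^sup>2) \<le> (norm (x - x'))\<^sup>2"
    by (intro cINF_lower bdd_belowI2[where m=0]) auto
  then have "\<sigma> / 2 * (INF xs\<in>{xs. pareto_optimal S m F xs}. (norm (x - xs))\<^sup>2)
               \<le> \<sigma> / 2 * (norm (x - x'))\<^sup>2"
    using \<open>\<sigma> > 0\<close> by (intro mult_left_mono) auto
  also have "\<dots> \<le> g x - g x'"
    using sigma_convex_on_quadratic_growth[OF g_convex assms(3) x' assms(8)] by simp
  also have "\<dots> = u0 S m F x"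
    using u0_eq_uminus_Max_at_minimiser[OF assms(4) x'(1)] x'(2) I by (simp add: g_def)
  finally show ?thesis
    unfolding \<sigma>_def .
qed

end
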